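(* For every finite graph $G$, $\mathrm{copw}_1(G)=\deg(G)+1$.
   Context: Graphs are finite, simple, undirected. The degeneracy $\deg(G)$ is the least $d$ such that there is a total order of $V(G)$ in which every vertex has at most $d$ neighbours preceding it. For $r\in\mathbb N\cup\{\infty\}$ and $k\ge 1$, the Cops and Robber game of radius $r$ and width $k$ on $G$ is played as follows. Let $S_0=\emptyset$; the robber chooses an initial vertex $v_0$. In round $i\ge1$ the cops announce a set $S_i\subseteq V(G)$ with $|S_i|\le k$ (their new positions); knowing $S_i$, the robber moves from $v_{i-1}$ to a vertex $v_i$ along a path of length at most $r$ (any length if $r=\infty$; length $0$ allowed) that contains no vertex of $S_{i-1}\cap S_i$ (the cops that remain on the ground). The cops win if $v_i\in S_i$ for some $i$; the robber wins if this never happens. The radius-$r$ cop-width $\mathrm{copw}_r(G)$ is the least $k$ such that the cops have a winning strategy in this game of radius $r$ and width $k$. *)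

theory Defs
  imports Main "HOL-Library.Extended_Nat"
begin

definition simple_graph :: "'a set \<Rightarrow> ('a \<Rightarrow> 'a \<Rightarrow> bool) \<Rightarrow> bool" where
  "simple_graph V E \<longleftrightarrow>
     (\<forall>u v. E u v \<longrightarrow> u \<in> V \<and> v \<in> V) \<and> (\<forall>u v. E u v \<longrightarrow> E v u) \<and> (\<forall>v. \<not> E v v)"

definition degen_order :: "'a set \<Rightarrow> ('a \<Rightarrow> 'a \<Rightarrow> bool) \<Rightarrow> 'a list \<Rightarrow> nat \<Rightarrow> bool" where
  "degen_order V E xs d \<longleftrightarrow> distinct xs \<and> set xs = V \<and>
     (\<forall>i < length xs. card {j. j < i \<and> E (xs ! j) (xs ! i)} \<le> d)"

definition degeneracy :: "'a set \<Rightarrow> ('a \<Rightarrow> 'a \<Rightarrow> bool) \<Rightarrow> nat" where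
  "degeneracy V E = (LEAST d. \<exists>xs. degen_order V E xs d)"

text \<open>A walk p (list of vertices) from u to w in the graph, avoiding the set X.
  Its length is length p - 1 (number of edges).\<close>
definition walk_avoiding :: "'a set \<Rightarrow> ('a \<Rightarrow> 'a \<Rightarrow> bool) \<Rightarrow> 'a set \<Rightarrow> 'a list \<Rightarrow> 'a \<Rightarrow> 'a \<Rightarrow> bool" where
  "walk_avoiding V E X p u w \<longleftrightarrow> p \<noteq> [] \<and> hd p = u \<and> last p = w \<and> set p \<subseteq> V \<and>
     set p \<inter> X = {} \<and> (\<forall>i. Suc i < length p \<longrightarrow> E (p ! i) (p ! Suc i))"

text \<open>A cop strategy maps the robber's history [v_0,...,v_{i-1}] to the new cop set S_i.\<close>
definition cop_strategy :: "'a set \<Rightarrow> nat \<Rightarrow> ('a list \<Rightarrow> 'a set) \<Rightarrow> bool" where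
  "cop_strategy V k \<sigma> \<longleftrightarrow> (\<forall>h. \<sigma> h \<subseteq> V \<and> card (\<sigma> h) \<le> k)"

definition cop_pos :: "('a list \<Rightarrow> 'a set) \<Rightarrow> (nat \<Rightarrow> 'a) \<Rightarrow> nat \<Rightarrow> 'a set" where
  "cop_pos \<sigma> v i = (if i = 0 then {} else \<sigma> (map v [0..<i]))"

definition robber_play :: "'a set \<Rightarrow> ('a \<Rightarrow> 'a \<Rightarrow> bool) \<Rightarrow> enat \<Rightarrow> ('a list \<Rightarrow> 'a set) \<Rightarrow> (nat \<Rightarrow> 'a) \<Rightarrow> bool" where
  "robber_play V E r \<sigma> v \<longleftrightarrow> v 0 \<in> V \<and>
     (\<forall>i \<ge> 1. \<exists>p. walk_avoiding V E (cop_pos \<sigma> v (i - 1) \<inter> cop_pos \<sigma> v i) p (v (i - 1)) (v i)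
                  \<and> enat (length p - 1) \<le> r)"

definition cops_win :: "'a set \<Rightarrow> ('a \<Rightarrow> 'a \<Rightarrow> bool) \<Rightarrow> enat \<Rightarrow> nat \<Rightarrow> bool" where
  "cops_win V E r k \<longleftrightarrow> (\<exists>\<sigma>. cop_strategy V k \<sigma> \<and>
     (\<forall>v. robber_play V E r \<sigma> v \<longrightarrow> (\<exists>i \<ge> 1. v i \<in> cop_pos \<sigma> v i)))"

definition copw :: "'a set \<Rightarrow> ('a \<Rightarrow> 'a \<Rightarrow> bool) \<Rightarrow> enat \<Rightarrow> nat" where
  "copw V E r = (LEAST k. k \<ge> 1 \<and> cops_win V E r k)"

end

theory Submission
  imports Defs
begin

(* The upper bound: in a degeneracy order, d + 1 cops occupy the robber's vertex and its at most
   d earlier neighbours, so the robber can only move to a later vertex; after |V| rounds it is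
   caught.  The lower bound: if every nonempty vertex set had a vertex with at most d - 1
   neighbours inside it, peeling such vertices off would give an order witnessing degeneracy
   d - 1; hence there is a nonempty H in which every vertex has at least d neighbours, and
   k <= d cops can never block a robber in H together with all its neighbours in H. *)

lemma degen_order_degeneracy:
  assumes "finite V"
  shows "\<exists>xs. degen_order V E xs (degeneracy V E)"
proof -
  obtain xs where xs: "set xs = V" "distinct xs" using finite_distinct_list assms by blast
  have "degen_order V E xs (length xs)"
    unfolding degen_order_def
  proof (intro conjI xs allI impI)
    fix i assume "i < length xs"
    moreover have "card {j. j < i \<and> E (xs ! j) (xs ! i)} \<le> card {..<i}" by (intro card_mono) auto
    ultimately show "card {j. j < i \<and> E (xs ! j) (xs ! i)} \<le> length xs" by simp
  qed
  then show ?thesis unfolding degeneracy_def by (rule LeastI_ex[OF exI, OF exI])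
qed

lemma degen_order_snoc:
  assumes xs: "degen_order U E xs c" and "u \<notin> U" and "card {w\<in>U. E w u} \<le> c"
  shows "degen_order (insert u U) E (xs @ [u]) c"
  unfolding degen_order_def
proof (intro conjI allI impI)
  show "distinct (xs @ [u])" "set (xs @ [u]) = insert u U"
    using xs \<open>u \<notin> U\<close> by (auto simp: degen_order_def)
  fix i assume i: "i < length (xs @ [u])"
  show "card {j. j < i \<and> E ((xs @ [u]) ! j) ((xs @ [u]) ! i)} \<le> c"
  proof (cases "i < length xs")
    case True
    then have "{j. j < i \<and> E ((xs @ [u]) ! j) ((xs @ [u]) ! i)} = {j. j < i \<and> E (xs ! j) (xs ! i)}"
      by (auto simp: nth_append)
    then show ?thesis using xs True by (simp add: degen_order_def)
  next
    case False
    let ?J = "{j. j < length xs \<and> E (xs ! j) u}"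
    have "i = length xs" using i False by simp
    then have "{j. j < i \<and> E ((xs @ [u]) ! j) ((xs @ [u]) ! i)} = ?J"
      by (auto simp: nth_append)
    moreover have "inj_on (nth xs) ?J"
      using xs by (intro inj_on_nth) (auto simp: degen_order_def)
    moreover have "nth xs ` ?J = {w\<in>U. E w u}"
      using xs by (auto simp: degen_order_def in_set_conv_nth)
    ultimately show ?thesis using assms(3) by (metis card_image)
  qed
qed

lemma degen_order_by_peeling:
  assumes "finite U"
    and low: "\<And>W. W \<subseteq> U \<Longrightarrow> W \<noteq> {} \<Longrightarrow> \<exists>u\<in>W. card {w\<in>W. E w u} \<le> c"
  shows "\<exists>xs. degen_order U E xs c"
  using assms
proof (induction U rule: finite_remove_induct)
  case empty
  show ?case by (auto simp: degen_order_def)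
next
  case (remove U)
  then obtain u where u: "u \<in> U" "card {w\<in>U. E w u} \<le> c" by blast
  moreover have "\<exists>u\<in>W. card {w\<in>W. E w u} \<le> c" if "W \<subseteq> U - {u}" "W \<noteq> {}" for W
    using remove.prems that by blast
  ultimately obtain xs where "degen_order (U - {u}) E xs c"
    using remove.IH by blast
  moreover have "card {w\<in>U - {u}. E w u} \<le> card {w\<in>U. E w u}"
    using remove.hyps(1) by (intro card_mono) auto
  ultimately have "degen_order (insert u (U - {u})) E (xs @ [u]) c"
    using u(2) by (intro degen_order_snoc) auto
  then show ?case using u(1) by (auto simp: insert_absorb)
qed

lemma dense_subgraph_if_degeneracy_gt:
  assumes "finite V" and "c < degeneracy V E"
  shows "\<exists>H\<subseteq>V. H \<noteq> {} \<and> (\<forall>u\<in>H. c < card {w\<in>H. E w u})"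
proof (rule ccontr)
  assume "\<not> ?thesis"
  then have "\<exists>xs. degen_order V E xs c"
    using degen_order_by_peeling[OF \<open>finite V\<close>] by (meson not_le)
  then have "degeneracy V E \<le> c" unfolding degeneracy_def by (rule Least_le)
  then show False using assms(2) by simp
qed

lemma degen_order_rank:
  assumes "degen_order V E xs d"
  shows "\<exists>rk. bij_betw rk V {..<card V} \<and> (\<forall>u\<in>V. card {w\<in>V. rk w < rk u \<and> E w u} \<le> d)"
proof (intro exI conjI ballI)
  let ?rk = "the_inv_into {..<length xs} (nth xs)"
  have dist: "distinct xs" and set: "set xs = V"
    and bound: "\<And>i. i < length xs \<Longrightarrow> card {j. j < i \<and> E (xs ! j) (xs ! i)} \<le> d"
    using assms by (auto simp: degen_order_def)
  have nth: "bij_betw (nth xs) {..<length xs} V"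
    using dist set by (intro bij_betw_nth) auto
  have card: "card V = length xs"
    using distinct_card[OF dist] set by simp
  show rk: "bij_betw ?rk V {..<card V}"
    using bij_betw_the_inv_into[OF nth] card by simp
  have rk_nth: "xs ! ?rk w = w" if "w \<in> V" for w
    using nth that by (rule f_the_inv_into_f_bij_betw)
  fix u assume u: "u \<in> V"
  let ?J = "{j. j < ?rk u \<and> E (xs ! j) (xs ! ?rk u)}"
  have "{w\<in>V. ?rk w < ?rk u \<and> E w u} \<subseteq> nth xs ` ?J"
  proof
    fix w assume w: "w \<in> {w\<in>V. ?rk w < ?rk u \<and> E w u}"
    then have "w = xs ! ?rk w" using rk_nth by simp
    moreover have "?rk w \<in> ?J" using w rk_nth u by simp
    ultimately show "w \<in> nth xs ` ?J" by (rule image_eqI)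
  qed
  then have "card {w\<in>V. ?rk w < ?rk u \<and> E w u} \<le> card (nth xs ` ?J)"
    by (intro card_mono) auto
  also have "\<dots> \<le> card ?J"
    by (intro card_image_le) auto
  also have "\<dots> \<le> d"
    using bound bij_betw_apply[OF rk u] card by simp
  finally show "card {w\<in>V. ?rk w < ?rk u \<and> E w u} \<le> d" .
qed

lemma walk_radius_one_iff:
  "(\<exists>p. walk_avoiding V E X p u w \<and> enat (length p - 1) \<le> 1) \<longleftrightarrow>
     u \<in> V \<and> w \<in> V \<and> u \<notin> X \<and> w \<notin> X \<and> (w = u \<or> E u w)"
proof
  assume "\<exists>p. walk_avoiding V E X p u w \<and> enat (length p - 1) \<le> 1"
  then obtain p where p: "walk_avoiding V E X p u w" and "length p \<le> 2"
    by (auto simp: one_enat_def)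
  then consider x where "p = [x]" | x y where "p = [x, y]"
    by (auto simp: walk_avoiding_def length_Suc_conv numeral_2_eq_2 le_Suc_eq)
  then show "u \<in> V \<and> w \<in> V \<and> u \<notin> X \<and> w \<notin> X \<and> (w = u \<or> E u w)"
    by cases (use p in \<open>auto simp: walk_avoiding_def\<close>)
next
  assume uw: "u \<in> V \<and> w \<in> V \<and> u \<notin> X \<and> w \<notin> X \<and> (w = u \<or> E u w)"
  show "\<exists>p. walk_avoiding V E X p u w \<and> enat (length p - 1) \<le> 1"
  proof (cases "w = u")
    case True
    then show ?thesis using uw by (intro exI[of _ "[u]"]) (auto simp: walk_avoiding_def one_enat_def)
  next
    case False
    then show ?thesis using uw
      by (intro exI[of _ "[u, w]"]) (auto simp: walk_avoiding_def less_Suc_eq one_enat_def)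
  qed
qed

lemma all_ge_one_iff_all_Suc: "(\<forall>i\<ge>1. P i) \<longleftrightarrow> (\<forall>i. P (Suc i))"
  by (auto simp: Suc_le_eq gr0_conv_Suc)

lemma robber_play_radius_one_iff:
  "robber_play V E 1 \<sigma> v \<longleftrightarrow>
     (\<forall>i. v i \<in> V \<and> (v (Suc i) = v i \<or> E (v i) (v (Suc i))) \<and>
          {v i, v (Suc i)} \<inter> cop_pos \<sigma> v i \<inter> cop_pos \<sigma> v (Suc i) = {})"
  (is "_ \<longleftrightarrow> (\<forall>i. ?step i)")
proof -
  have "robber_play V E 1 \<sigma> v \<longleftrightarrow> v 0 \<in> V \<and> (\<forall>i. ?step i \<and> v (Suc i) \<in> V)"
    unfolding robber_play_def all_ge_one_iff_all_Suc walk_radius_one_iff by auto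
  also have "\<dots> \<longleftrightarrow> (\<forall>i. ?step i)"
    by (metis not0_implies_Suc)
  finally show ?thesis .
qed

fun response_history :: "('a list \<Rightarrow> 'a) \<Rightarrow> 'a \<Rightarrow> nat \<Rightarrow> 'a list" where
  "response_history f a 0 = [a]"
| "response_history f a (Suc n) = response_history f a n @ [f (response_history f a n)]"

definition response_play :: "('a list \<Rightarrow> 'a) \<Rightarrow> 'a \<Rightarrow> nat \<Rightarrow> 'a" where
  "response_play f a n = last (response_history f a n)"

lemma response_history_eq: "response_history f a n = map (response_play f a) [0..<Suc n]"
proof (induction n)
  case 0
  show ?case by (simp add: response_play_def)
next
  case (Suc n)
  have "response_play f a (Suc n) = f (response_history f a n)"
    by (simp add: response_play_def)
  with Suc show ?case by simp
qed

lemma response_play_0: "response_play f a 0 = a"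
  by (simp add: response_play_def)

lemma response_play_Suc: "response_play f a (Suc n) = f (map (response_play f a) [0..<Suc n])"
  unfolding response_history_eq[symmetric] by (simp add: response_play_def)

lemma escape_within_distance_one:
  assumes "\<not> E u u" and "finite X" and "card X \<le> k" and "k \<le> card {w\<in>H. E u w}" and "u \<in> H"
  shows "\<exists>w\<in>H. w \<notin> X \<and> (w = u \<or> E u w)"
proof (rule ccontr)
  assume "\<not> ?thesis"
  then have sub: "insert u {w\<in>H. E u w} \<subseteq> X" using \<open>u \<in> H\<close> by blast
  then have "finite {w\<in>H. E u w}" using \<open>finite X\<close> by (meson finite_insert finite_subset)
  then have "card {w\<in>H. E u w} < card (insert u {w\<in>H. E u w})"
    using \<open>\<not> E u u\<close> by simp
  also have "\<dots> \<le> card X" using sub \<open>finite X\<close> by (rule card_mono[rotated])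
  finally show False using assms(3,4) by simp
qed

lemma robber_escapes_in_min_degree_subgraph:
  assumes "simple_graph V E" and "finite V" and "H \<subseteq> V" and "H \<noteq> {}"
    and min_deg: "\<forall>u\<in>H. k \<le> card {w\<in>H. E u w}"
  shows "\<not> cops_win V E 1 k"
proof
  assume "cops_win V E 1 k"
  then obtain \<sigma> where \<sigma>: "cop_strategy V k \<sigma>"
    and win: "\<And>v. robber_play V E 1 \<sigma> v \<Longrightarrow> \<exists>i\<ge>1. v i \<in> cop_pos \<sigma> v i"
    unfolding cops_win_def by blast
  define f where "f h = (SOME w. w \<in> H \<and> w \<notin> \<sigma> h \<and> (w = last h \<or> E (last h) w))" for h
  have f: "f h \<in> H \<and> f h \<notin> \<sigma> h \<and> (f h = last h \<or> E (last h) (f h))" if "last h \<in> H" for h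
  proof -
    have "\<not> E (last h) (last h)" using \<open>simple_graph V E\<close> by (simp add: simple_graph_def)
    moreover have "finite (\<sigma> h)" "card (\<sigma> h) \<le> k"
      using \<sigma> \<open>finite V\<close> by (auto simp: cop_strategy_def intro: finite_subset)
    ultimately have "\<exists>w. w \<in> H \<and> w \<notin> \<sigma> h \<and> (w = last h \<or> E (last h) w)"
      using escape_within_distance_one[of E "last h" "\<sigma> h" k H] min_deg that by blast
    then show ?thesis unfolding f_def by (rule someI_ex)
  qed
  obtain a where "a \<in> H" using \<open>H \<noteq> {}\<close> by blast
  define v where "v = response_play f a"
  have v_0: "v 0 = a"
    unfolding v_def by (rule response_play_0)
  have v_Suc: "v (Suc i) = f (map v [0..<Suc i])" for i
    unfolding v_def by (rule response_play_Suc)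
  have cop_pos_Suc: "cop_pos \<sigma> v (Suc i) = \<sigma> (map v [0..<Suc i])" for i
    by (simp add: cop_pos_def)
  have v_H: "v i \<in> H" for i
  proof (induction i)
    case (Suc i)
    then show ?case using f[of "map v [0..<Suc i]"] by (simp add: v_Suc)
  qed (simp add: v_0 \<open>a \<in> H\<close>)
  have step: "v (Suc i) \<notin> cop_pos \<sigma> v (Suc i) \<and> (v (Suc i) = v i \<or> E (v i) (v (Suc i)))" for i
    using f[of "map v [0..<Suc i]"] v_H[of i] by (simp add: v_Suc cop_pos_Suc)
  have uncaught: "v i \<notin> cop_pos \<sigma> v i" for i
    using step by (cases i) (auto simp: cop_pos_def)
  have "{v i, v (Suc i)} \<inter> cop_pos \<sigma> v i \<inter> cop_pos \<sigma> v (Suc i) = {}" for i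
    using uncaught[of i] uncaught[of "Suc i"] by blast
  then have "robber_play V E 1 \<sigma> v"
    unfolding robber_play_radius_one_iff using v_H \<open>H \<subseteq> V\<close> step by blast
  then show False using win uncaught by blast
qed

definition rank_strategy :: "'a set \<Rightarrow> ('a \<Rightarrow> 'a \<Rightarrow> bool) \<Rightarrow> ('a \<Rightarrow> nat) \<Rightarrow> 'a list \<Rightarrow> 'a set" where
  "rank_strategy V E rk h =
     (if last h \<in> V then insert (last h) {w\<in>V. rk w < rk (last h) \<and> E w (last h)} else {})"

lemma cop_strategy_rank_strategy:
  assumes "finite V" and earlier: "\<forall>u\<in>V. card {w\<in>V. rk w < rk u \<and> E w u} \<le> d"
  shows "cop_strategy V (d + 1) (rank_strategy V E rk)"
  unfolding cop_strategy_def
proof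
  fix h
  show "rank_strategy V E rk h \<subseteq> V \<and> card (rank_strategy V E rk h) \<le> d + 1"
  proof (cases "last h \<in> V")
    case True
    have "card (rank_strategy V E rk h) \<le> card {w\<in>V. rk w < rk (last h) \<and> E w (last h)} + 1"
      using True \<open>finite V\<close> by (simp add: rank_strategy_def card_insert_if)
    then show ?thesis using True earlier by (auto simp: rank_strategy_def)
  qed (simp add: rank_strategy_def)
qed

lemma rank_increases_against_rank_strategy:
  assumes sym: "\<And>u w. E u w \<Longrightarrow> E w u" and "inj_on rk V"
    and play: "robber_play V E 1 (rank_strategy V E rk) v"
    and uncaught: "v (Suc i) \<notin> cop_pos (rank_strategy V E rk) v (Suc i)"
  shows "rk (v i) < rk (v (Suc i))"
proof -
  have V: "v i \<in> V" "v (Suc i) \<in> V" and move: "v (Suc i) = v i \<or> E (v i) (v (Suc i))"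
    using play unfolding robber_play_radius_one_iff by blast+
  have "cop_pos (rank_strategy V E rk) v (Suc i) = insert (v i) {w\<in>V. rk w < rk (v i) \<and> E w (v i)}"
    using V by (simp add: cop_pos_def rank_strategy_def)
  then have "v (Suc i) \<noteq> v i" "\<not> (rk (v (Suc i)) < rk (v i) \<and> E (v (Suc i)) (v i))"
    using uncaught V by auto
  moreover from this have "rk (v (Suc i)) \<noteq> rk (v i)"
    using inj_onD[OF \<open>inj_on rk V\<close>] V by blast
  ultimately show ?thesis using move sym by fastforce
qed

lemma cops_win_degeneracy_plus_one:
  assumes "simple_graph V E" and "finite V"
  shows "cops_win V E 1 (degeneracy V E + 1)"
proof -
  obtain xs where "degen_order V E xs (degeneracy V E)"
    using degen_order_degeneracy[OF \<open>finite V\<close>] by blast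
  then obtain rk where rk: "bij_betw rk V {..<card V}"
    and earlier: "\<forall>u\<in>V. card {w\<in>V. rk w < rk u \<and> E w u} \<le> degeneracy V E"
    using degen_order_rank by blast
  have sym: "\<And>u w. E u w \<Longrightarrow> E w u" using assms(1) by (simp add: simple_graph_def)
  have "\<exists>i\<ge>1. v i \<in> cop_pos (rank_strategy V E rk) v i"
    if play: "robber_play V E 1 (rank_strategy V E rk) v" for v
  proof (rule ccontr)
    assume "\<not> ?thesis"
    then have increasing: "rk (v i) < rk (v (Suc i))" for i
      using rank_increases_against_rank_strategy[OF sym bij_betw_imp_inj_on[OF rk] play] by simp
    have "i \<le> rk (v i)" for i
    proof (induction i)
      case (Suc i)
      then show ?case using increasing[of i] by simp
    qed simp
    moreover have "v (card V) \<in> V"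
      using play unfolding robber_play_radius_one_iff by blast
    then have "rk (v (card V)) < card V"
      using bij_betw_apply[OF rk] by simp
    ultimately show False using not_le by blast
  qed
  then show ?thesis
    unfolding cops_win_def using cop_strategy_rank_strategy[OF \<open>finite V\<close> earlier] by blast
qed

lemma not_cops_win_below_degeneracy:
  assumes "simple_graph V E" and "finite V" and "0 < k" and "k \<le> degeneracy V E"
  shows "\<not> cops_win V E 1 k"
proof -
  have sym: "\<And>u w. E u w \<Longrightarrow> E w u" using assms(1) by (simp add: simple_graph_def)
  have "k - 1 < degeneracy V E" using assms(3,4) by simp
  then have "\<exists>H\<subseteq>V. H \<noteq> {} \<and> (\<forall>u\<in>H. k - 1 < card {w\<in>H. E w u})"
    by (rule dense_subgraph_if_degeneracy_gt[OF assms(2)])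
  then obtain H where H: "H \<subseteq> V" "H \<noteq> {}" and dense: "\<forall>u\<in>H. k - 1 < card {w\<in>H. E w u}"
    by blast
  have "\<forall>u\<in>H. k \<le> card {w\<in>H. E u w}"
  proof
    fix u assume "u \<in> H"
    then have "k - 1 < card {w\<in>H. E w u}" using dense by blast
    also have "{w\<in>H. E w u} = {w\<in>H. E u w}" using sym by blast
    finally show "k \<le> card {w\<in>H. E u w}" using \<open>0 < k\<close> by simp
  qed
  then show ?thesis using robber_escapes_in_min_degree_subgraph[OF assms(1,2) H] by blast
qed

theorem mainTheorem1:
  fixes V :: "'a set" and E :: "'a \<Rightarrow> 'a \<Rightarrow> bool"
  assumes "simple_graph V E" and "finite V"
  shows "copw V E 1 = degeneracy V E + 1"
  unfolding copw_def
proof (rule Least_equality)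
  show "1 \<le> degeneracy V E + 1 \<and> cops_win V E 1 (degeneracy V E + 1)"
    using cops_win_degeneracy_plus_one[OF assms] by simp
next
  fix k assume "1 \<le> k \<and> cops_win V E 1 k"
  then show "degeneracy V E + 1 \<le> k"
    using not_cops_win_below_degeneracy[OF assms, of k] by (cases "k \<le> degeneracy V E") auto
qed

end
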